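(* Let $\mu\in\mathbb{R}$, $\alpha>0$ and $y\in\mathbb{R}$ with $|y|\ge2|\mu|$. Then there is a unique $x_y\in\mathbb{R}$ with $x_y=\mu\log|x_y+iy|-\log\alpha$. Moreover, if $x>x_y$ then $x>\mu\log|x+iy|-\log\alpha$, and if $x<x_y$ then $x<\mu\log|x+iy|-\log\alpha$. *)

theory Defs
  imports "HOL-Analysis.Analysis"
begin

end

theory Submission
  imports Defs
begin

text \<open>Write \<open>f x = x - \<mu> ln |x + iy| + ln \<alpha>\<close>; the equation for \<open>x\<^sub>y\<close> says \<open>f x\<^sub>y = 0\<close>.
  Since \<open>f' x = 1 - \<mu> x / (x\<^sup>2 + y\<^sup>2)\<close> and \<open>|\<mu> x| \<le> |y| |x| / 2 \<le> (x\<^sup>2 + y\<^sup>2) / 4\<close>,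
  we get \<open>f' \<ge> 3/4\<close>. So \<open>f\<close> is strictly increasing and grows at least linearly in both
  directions, hence has exactly one zero, below which it is negative and above which it is
  positive.\<close>

lemma DERIV_ge_imp_diff_ge:
  fixes f f' :: "real \<Rightarrow> real"
  assumes "a \<le> b"
    and "\<And>x. (f has_real_derivative f' x) (at x)" and "\<And>x. c \<le> f' x"
  shows "c * (b - a) \<le> f b - f a"
proof (cases "a = b")
  case False
  with \<open>a \<le> b\<close> obtain z where "f b - f a = (b - a) * f' z"
    using MVT2[of a b f f'] assms(2) by force
  moreover have "c * (b - a) \<le> f' z * (b - a)"
    using assms(1,3) by (simp add: mult_right_mono)
  ultimately show ?thesis by (simp add: mult.commute)
qed simp

lemma DERIV_ge_pos_imp_strict_mono:
  fixes f f' :: "real \<Rightarrow> real"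
  assumes "\<And>x. (f has_real_derivative f' x) (at x)" and "\<And>x. c \<le> f' x" and "0 < c"
  shows "strict_mono f"
proof (rule strict_monoI)
  fix a b :: real assume "a < b"
  then have "0 < c * (b - a)" using \<open>0 < c\<close> by simp
  also have "\<dots> \<le> f b - f a" using DERIV_ge_imp_diff_ge[of a b f f' c] \<open>a < b\<close> assms by simp
  finally show "f a < f b" by simp
qed

lemma DERIV_ge_pos_imp_has_zero:
  fixes f f' :: "real \<Rightarrow> real"
  assumes deriv: "\<And>x. (f has_real_derivative f' x) (at x)" and "\<And>x. c \<le> f' x" and "0 < c"
  shows "\<exists>z. f z = 0"
proof -
  define M where "M = \<bar>f 0\<bar> / c"
  have "0 \<le> M" using \<open>0 < c\<close> by (simp add: M_def)
  have "c * M = \<bar>f 0\<bar>" using \<open>0 < c\<close> by (simp add: M_def)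
  moreover have "c * (M - 0) \<le> f M - f 0" "c * (0 - - M) \<le> f 0 - f (- M)"
    using DERIV_ge_imp_diff_ge[of 0 M f f' c] DERIV_ge_imp_diff_ge[of "- M" 0 f f' c]
      \<open>0 \<le> M\<close> assms by simp_all
  ultimately have "f (- M) \<le> 0" "0 \<le> f M" by auto
  moreover have "continuous_on {- M..M} f"
    using deriv by (blast intro: DERIV_continuous_on has_field_derivative_at_within)
  ultimately show ?thesis
    using IVT'[of f "- M" 0 M] \<open>0 \<le> M\<close> by auto
qed

lemma mult_div_sum_squares_le_quarter:
  fixes \<mu> x y :: real
  assumes "2 * \<bar>\<mu>\<bar> \<le> \<bar>y\<bar>"
  shows "\<mu> * x / (x\<^sup>2 + y\<^sup>2) \<le> 1 / 4"
proof (cases "x\<^sup>2 + y\<^sup>2 = 0")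
  case False
  then have pos: "0 < x\<^sup>2 + y\<^sup>2" by (simp add: add_nonneg_nonneg order_less_le)
  have "2 * \<bar>\<mu> * x\<bar> \<le> \<bar>y\<bar> * \<bar>x\<bar>"
    using mult_right_mono[OF assms abs_ge_zero[of x]] by (simp add: abs_mult)
  also have "\<dots> \<le> (x\<^sup>2 + y\<^sup>2) / 2"
    using sum_squares_bound[of "\<bar>x\<bar>" "\<bar>y\<bar>"] by (simp add: mult_ac)
  finally show ?thesis
    using pos by (simp add: divide_le_eq abs_le_iff)
qed simp

lemma has_real_derivative_ln_cmod_Complex:
  fixes x y :: real
  assumes "y \<noteq> 0"
  shows "((\<lambda>t. ln (cmod (Complex t y))) has_real_derivative x / (x\<^sup>2 + y\<^sup>2)) (at x)"
proof -
  have pos: "0 < t\<^sup>2 + y\<^sup>2" for t :: real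
    using assms by (simp add: add_nonneg_pos)
  have ln_cmod: "ln (cmod (Complex t y)) = ln (t\<^sup>2 + y\<^sup>2) / 2" for t
    using pos[of t] by (simp add: complex_norm ln_sqrt)
  show ?thesis
    unfolding ln_cmod
    using pos[of x] by (auto intro!: derivative_eq_intros simp: divide_simps)
qed

lemma has_real_derivative_diff_mult_ln_cmod_Complex:
  fixes \<mu> x y :: real
  assumes "y \<noteq> 0 \<or> \<mu> = 0"
  shows "((\<lambda>t. t - \<mu> * ln (cmod (Complex t y))) has_real_derivative
           1 - \<mu> * x / (x\<^sup>2 + y\<^sup>2)) (at x)"
proof (cases "\<mu> = 0")
  case True
  then show ?thesis by (auto intro!: derivative_eq_intros)
next
  case False
  with assms have "y \<noteq> 0" by simp
  from DERIV_diff[OF DERIV_ident DERIV_cmult[OF has_real_derivative_ln_cmod_Complex[OF this]]]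
  show ?thesis by simp
qed

theorem lemma5p1:
  fixes \<mu> \<alpha> y :: real
  assumes "\<alpha> > 0" and "\<bar>y\<bar> \<ge> 2 * \<bar>\<mu>\<bar>"
  shows "(\<exists>!xy::real. xy = \<mu> * ln (cmod (Complex xy y)) - ln \<alpha>) \<and>
         (\<forall>xy::real. xy = \<mu> * ln (cmod (Complex xy y)) - ln \<alpha> \<longrightarrow>
           (\<forall>x::real. x > xy \<longrightarrow> x > \<mu> * ln (cmod (Complex x y)) - ln \<alpha>) \<and>
           (\<forall>x::real. x < xy \<longrightarrow> x < \<mu> * ln (cmod (Complex x y)) - ln \<alpha>))"
proof -
  define f where "f x = x - \<mu> * ln (cmod (Complex x y)) + ln \<alpha>" for x
  have "y \<noteq> 0 \<or> \<mu> = 0" using assms(2) by auto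
  from DERIV_add[OF has_real_derivative_diff_mult_ln_cmod_Complex[OF this] DERIV_const]
  have deriv: "(f has_real_derivative 1 - \<mu> * x / (x\<^sup>2 + y\<^sup>2)) (at x)" for x
    unfolding f_def by simp
  have bound: "3 / 4 \<le> 1 - \<mu> * x / (x\<^sup>2 + y\<^sup>2)" for x
    using mult_div_sum_squares_le_quarter[OF assms(2)] by simp
  have mono: "strict_mono f"
    using DERIV_ge_pos_imp_strict_mono[OF deriv bound] by simp
  obtain z where "f z = 0"
    using DERIV_ge_pos_imp_has_zero[OF deriv bound] by auto
  moreover have "x = \<mu> * ln (cmod (Complex x y)) - ln \<alpha> \<longleftrightarrow> f x = 0"
    "x > \<mu> * ln (cmod (Complex x y)) - ln \<alpha> \<longleftrightarrow> f x > 0"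
    "x < \<mu> * ln (cmod (Complex x y)) - ln \<alpha> \<longleftrightarrow> f x < 0" for x
    by (auto simp: f_def)
  ultimately show ?thesis
    using strict_mono_eq[OF mono] strict_mono_less[OF mono] by metis
qed

end
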